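(* Let $A,B\in\mathrm{SL}_2\mathbb{Z}_{\ge0}$ be noncommuting, well oriented, with $\mathrm{tr}(A)<\mathrm{tr}(B)$ and $\mathrm{tr}(AB)=\mathrm{tr}(B^2)$. Fix a (possibly empty) word $w$ and an integer $s\ge0$. Then: (1) $[wab(ab^2)^sab^3]<[wab^2(ab^2)^sab^2]$; (2) $[wab^3(ab^2)^sab]<[wab^2(ab^2)^sab^2]$, provided $w$ is empty or begins with $a$.
   Context: Words are finite strings over $\{a,b\}$; $\phi$ is the monoid homomorphism with $\phi(a)=A,\phi(b)=B$, and $[w]=\mathrm{tr}(\phi(w))$. Fixed points are for the Möbius action on $\partial\mathcal{H}=\mathbb{P}^1\mathbb{R}$; $\alpha^\pm$ ($\beta^\pm$) are the attracting/repelling fixed points of $A$ ($B$), both equal to the unique fixed point if parabolic. With $\partial\mathcal{H}$ cyclically ordered and $[\alpha,\beta]$ the closed counterclockwise interval from $\alpha$ to $\beta$, let $I^+=\{\alpha^+\}$ if $\alpha^+=\beta^+$, and otherwise the one of $[\alpha^+,\beta^+],[\beta^+,\alpha^+]$ mapped into itself by both $A$ and $B$ (if it exists); define $I^-$ likewise with $A^{-1},B^{-1},\alpha^-,\beta^-$. The pair is coherently oriented if both exist, and well oriented if $A,B$ is coherently oriented but $A,B^{-1}$ is not. *)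

theory Defs
  imports "HOL-Analysis.Analysis"
begin

datatype letter = La | Lb

definition phi :: "int^2^2 \<Rightarrow> int^2^2 \<Rightarrow> letter list \<Rightarrow> int^2^2" where
  "phi A B w = foldr (\<lambda>l M. (case l of La \<Rightarrow> A | Lb \<Rightarrow> B) ** M) w (mat 1)"

definition trw :: "int^2^2 \<Rightarrow> int^2^2 \<Rightarrow> letter list \<Rightarrow> int" where
  "trw A B w = trace (phi A B w)"

definition SL2_nonneg :: "int^2^2 \<Rightarrow> bool" where
  "SL2_nonneg M \<longleftrightarrow> det M = 1 \<and> (\<forall>i j. M $ i $ j \<ge> 0)"

section \<open>The projective line P^1(R) = R \<union> {\<infinity>} (None = \<infinity>) and the Moebius action\<close>

definition realM :: "int^2^2 \<Rightarrow> real^2^2" where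
  "realM M = (\<chi> i j. real_of_int (M $ i $ j))"

definition proj :: "real^2 \<Rightarrow> real option" where
  "proj v = (if v $ 2 = 0 then None else Some (v $ 1 / v $ 2))"

fun hvec :: "real option \<Rightarrow> real^2" where
  "hvec None = vector [1, 0]"
| "hvec (Some x) = vector [x, 1]"

definition mob :: "real^2^2 \<Rightarrow> real option \<Rightarrow> real option" where
  "mob M z = proj (M *v hvec z)"

text \<open>For a parabolic matrix
  both are the unique fixed point.\<close>
definition attr_fix :: "real^2^2 \<Rightarrow> real option" where
  "attr_fix M = (SOME z. \<exists>v c. v \<noteq> 0 \<and> M *v v = c *s v \<and> z = proj v \<and>
      (\<forall>w \<mu>. w \<noteq> 0 \<and> M *v w = \<mu> *s w \<longrightarrow> \<bar>\<mu>\<bar> \<le> \<bar>c\<bar>))"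

definition rep_fix :: "real^2^2 \<Rightarrow> real option" where
  "rep_fix M = (SOME z. \<exists>v c. v \<noteq> 0 \<and> M *v v = c *s v \<and> z = proj v \<and>
      (\<forall>w \<mu>. w \<noteq> 0 \<and> M *v w = \<mu> *s w \<longrightarrow> \<bar>c\<bar> \<le> \<bar>\<mu>\<bar>))"

text \<open>Closed counterclockwise interval [x,y] of P^1(R) (cyclic order = increasing
  direction along R, wrapping through \<infinity>).\<close>
fun ccw_int :: "real option \<Rightarrow> real option \<Rightarrow> real option set" where
  "ccw_int (Some x) (Some y) =
     (if x \<le> y then Some ` {x..y} else Some ` {x..} \<union> {None} \<union> Some ` {..y})"
| "ccw_int None (Some y) = {None} \<union> Some ` {..y}"
| "ccw_int (Some x) None = Some ` {x..} \<union> {None}"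
| "ccw_int None None = {None}"

definition interval_exists :: "real^2^2 \<Rightarrow> real^2^2 \<Rightarrow> real option \<Rightarrow> real option \<Rightarrow> bool" where
  "interval_exists M N x y \<longleftrightarrow> x = y \<or>
     (\<exists>I \<in> {ccw_int x y, ccw_int y x}. mob M ` I \<subseteq> I \<and> mob N ` I \<subseteq> I)"

definition coherently_oriented :: "real^2^2 \<Rightarrow> real^2^2 \<Rightarrow> bool" where
  "coherently_oriented M N \<longleftrightarrow>
     interval_exists M N (attr_fix M) (attr_fix N) \<and>
     interval_exists (matrix_inv M) (matrix_inv N) (rep_fix M) (rep_fix N)"

definition well_oriented :: "int^2^2 \<Rightarrow> int^2^2 \<Rightarrow> bool" where
  "well_oriented A B \<longleftrightarrow> coherently_oriented (realM A) (realM B) \<and>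
     \<not> coherently_oriented (realM A) (matrix_inv (realM B))"

end

theory Submission
  imports Defs
begin

(* Over 2x2 matrices of determinant 1, Cayley-Hamilton b^2 = (tr b) b - 1 and b^-1 = tr b - b
   reduce each difference of traces to a short combination; for instance
     [W a b^2 (a R) b^2] - [W a b (a R) b^3] = tr (W a a R) - t tr (W a R b) + tr (W b R b),
   where t = tr (a b^-1) = tr a tr b - tr (a b) comes from a b^-1 + b a^-1 = t.
   The hypothesis tr (a b) = tr (b^2) gives t = 2 - tr b (tr b - tr a) <= 0, and traces of
   products of nonnegative matrices are nonnegative, so the difference is positive.
   In the second inequality the extra term is tr (W a b P b a^-1) = tr (a^-1 W a b P b),
   nonnegative when a^-1 W a is; this is where the condition on w enters. *)

lemma power_mult_rotate: "(x * y) ^ n * x = x * (y * x) ^ n"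
  for x y :: "'a::monoid_mult"
  by (induction n) (simp_all add: mult.assoc)

(* Mat2 a b c d is the matrix with rows (a, b) and (c, d).  A separate type is used because
   on int^2^2 the operator * is componentwise; here * is the matrix product, making a ring. *)

datatype 'a mat2 = Mat2 'a 'a 'a 'a

instantiation mat2 :: (comm_ring_1) ring_1
begin

definition "0 = Mat2 0 0 0 0"
definition "1 = Mat2 1 0 0 1"
fun plus_mat2 where
  "Mat2 a b c d + Mat2 a' b' c' d' = Mat2 (a + a') (b + b') (c + c') (d + d')"
fun minus_mat2 where
  "Mat2 a b c d - Mat2 a' b' c' d' = Mat2 (a - a') (b - b') (c - c') (d - d')"
fun uminus_mat2 where
  "- Mat2 a b c d = Mat2 (- a) (- b) (- c) (- d)"
fun times_mat2 where
  "Mat2 a b c d * Mat2 a' b' c' d' =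
     Mat2 (a * a' + b * c') (a * b' + b * d') (c * a' + d * c') (c * b' + d * d')"

instance
proof
  fix x y z :: "'a mat2"
  show "x * y * z = x * (y * z)" by (cases x; cases y; cases z) (simp add: algebra_simps)
  show "x + y + z = x + (y + z)" by (cases x; cases y; cases z) (simp add: algebra_simps)
  show "x + y = y + x" by (cases x; cases y) (simp add: algebra_simps)
  show "0 + x = x" by (cases x) (simp add: zero_mat2_def)
  show "- x + x = 0" by (cases x) (simp add: zero_mat2_def)
  show "x - y = x + - y" by (cases x; cases y) simp
  show "(x + y) * z = x * z + y * z" by (cases x; cases y; cases z) (simp add: algebra_simps)
  show "x * (y + z) = x * y + x * z" by (cases x; cases y; cases z) (simp add: algebra_simps)
  show "1 * x = x" by (cases x) (simp add: one_mat2_def)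
  show "x * 1 = x" by (cases x) (simp add: one_mat2_def)
  show "(0 :: 'a mat2) \<noteq> 1" by (simp add: zero_mat2_def one_mat2_def)
qed

end

fun tr2 :: "'a::comm_ring_1 mat2 \<Rightarrow> 'a" where
  "tr2 (Mat2 a b c d) = a + d"

fun det2 :: "'a::comm_ring_1 mat2 \<Rightarrow> 'a" where
  "det2 (Mat2 a b c d) = a * d - b * c"

fun adj2 :: "'a::comm_ring_1 mat2 \<Rightarrow> 'a mat2" where
  "adj2 (Mat2 a b c d) = Mat2 d (- b) (- c) a"

fun smult2 :: "'a::comm_ring_1 \<Rightarrow> 'a mat2 \<Rightarrow> 'a mat2" where
  "smult2 k (Mat2 a b c d) = Mat2 (k * a) (k * b) (k * c) (k * d)"

lemma tr2_add [simp]: "tr2 (X + Y) = tr2 X + tr2 Y"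
  by (cases X; cases Y) simp

lemma tr2_diff [simp]: "tr2 (X - Y) = tr2 X - tr2 Y"
  by (cases X; cases Y) simp

lemma tr2_smult2 [simp]: "tr2 (smult2 k X) = k * tr2 X"
  by (cases X) (simp add: algebra_simps)

lemma tr2_one [simp]: "tr2 (1 :: 'a::comm_ring_1 mat2) = 2"
  by (simp add: one_mat2_def)

lemma tr2_mult_commute: "tr2 (X * Y) = tr2 (Y * X)"
  by (cases X; cases Y) (simp add: algebra_simps)

lemma smult2_mult_left [simp]: "smult2 k X * Y = smult2 k (X * Y)"
  by (cases X; cases Y) (simp add: algebra_simps)

lemma smult2_mult_right [simp]: "X * smult2 k Y = smult2 k (X * Y)"
  by (cases X; cases Y) (simp add: algebra_simps)

lemma smult2_diff_right: "smult2 k (X - Y) = smult2 k X - smult2 k Y"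
  by (cases X; cases Y) (simp add: algebra_simps)

lemma det2_mult: "det2 (X * Y) = det2 X * det2 Y"
  by (cases X; cases Y) (simp add: algebra_simps)

lemma adj2_mult: "adj2 (X * Y) = adj2 Y * adj2 X"
  by (cases X; cases Y) (simp add: algebra_simps)

lemma adj2_adj2 [simp]: "adj2 (adj2 X) = X"
  by (cases X) simp

lemma add_adj2: "X + adj2 X = smult2 (tr2 X) 1"
  by (cases X) (simp add: one_mat2_def)

lemma adj2_eq: "adj2 X = smult2 (tr2 X) 1 - X"
  using add_adj2[of X] by (simp add: algebra_simps)

lemma adj2_mult_self: "adj2 X * X = smult2 (det2 X) 1"
  by (cases X) (simp add: one_mat2_def algebra_simps)

lemma cayley_hamilton2: "X * X = smult2 (tr2 X) X - smult2 (det2 X) 1"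
  by (cases X) (simp add: one_mat2_def algebra_simps)

lemma smult2_one_left [simp]: "smult2 1 X = X"
  by (cases X) simp

lemma sl2_square: "det2 X = 1 \<Longrightarrow> X * X = smult2 (tr2 X) X - 1"
  by (simp add: cayley_hamilton2[of X])

lemma sl2_adj2: "det2 X = 1 \<Longrightarrow> adj2 X * X = 1"
  by (simp add: adj2_mult_self)

lemma sl2_adj2_cancel: "det2 X = 1 \<Longrightarrow> adj2 X * (X * Y) = Y"
  by (simp add: sl2_adj2 flip: mult.assoc)

lemma tr2_mult_adj2: "tr2 (X * adj2 Y) = tr2 X * tr2 Y - tr2 (X * Y)"
proof -
  have "X * Y + X * adj2 Y = smult2 (tr2 Y) X"
    by (simp flip: distrib_left add: add_adj2)
  then have "tr2 (X * Y) + tr2 (X * adj2 Y) = tr2 Y * tr2 X"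
    by (metis tr2_add tr2_smult2)
  then show ?thesis by (simp add: algebra_simps)
qed

lemma sl2_square_mult: "det2 X = 1 \<Longrightarrow> X * (X * Y) = smult2 (tr2 X) (X * Y) - Y"
  by (simp add: sl2_square left_diff_distrib flip: mult.assoc)

lemma sl2_bbXbb_minus_bXbbb:
  assumes "det2 b = 1"
  shows "b * b * X * b * b - b * X * b * b * b = X - adj2 b * X * b"
  unfolding adj2_eq
  by (simp add: assms mult.assoc sl2_square_mult sl2_square algebra_simps smult2_diff_right)

lemma sl2_bbXbb_minus_bbbXb:
  assumes "det2 b = 1"
  shows "b * b * X * b * b - b * b * b * X * b = X - b * X * adj2 b"
  unfolding adj2_eq
  by (simp add: assms mult.assoc sl2_square_mult sl2_square algebra_simps smult2_diff_right)

lemma mult_adj2_swap: "X * adj2 Y = smult2 (tr2 (X * adj2 Y)) 1 - Y * adj2 X"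
proof -
  have "X * adj2 Y + Y * adj2 X = smult2 (tr2 (X * adj2 Y)) 1"
    using add_adj2[of "X * adj2 Y"] by (simp only: adj2_mult adj2_adj2)
  then show ?thesis
    by (metis add_diff_cancel_right')
qed

fun nonneg2 :: "'a::linordered_idom mat2 \<Rightarrow> bool" where
  "nonneg2 (Mat2 a b c d) \<longleftrightarrow> 0 \<le> a \<and> 0 \<le> b \<and> 0 \<le> c \<and> 0 \<le> d"

definition nonneg_sl2 :: "'a::linordered_idom mat2 \<Rightarrow> bool" where
  "nonneg_sl2 X \<longleftrightarrow> nonneg2 X \<and> det2 X = 1"

lemma nonneg2_mult: "nonneg2 X \<Longrightarrow> nonneg2 Y \<Longrightarrow> nonneg2 (X * Y)"
  by (cases X; cases Y) simp

lemma tr2_nonneg: "nonneg2 X \<Longrightarrow> 0 \<le> tr2 X"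
  by (cases X) simp

lemma nonneg_sl2_mult: "nonneg_sl2 X \<Longrightarrow> nonneg_sl2 Y \<Longrightarrow> nonneg_sl2 (X * Y)"
  by (simp add: nonneg_sl2_def nonneg2_mult det2_mult)

lemma nonneg2_one: "nonneg2 1"
  by (simp add: one_mat2_def)

lemma nonneg_sl2_one: "nonneg_sl2 1"
  by (simp add: nonneg_sl2_def nonneg2_one one_mat2_def)

lemma nonneg_sl2_power: "nonneg_sl2 X \<Longrightarrow> nonneg_sl2 (X ^ n)"
  by (induction n) (simp_all add: nonneg_sl2_one nonneg_sl2_mult)

lemma tr2_ge_2:
  assumes "nonneg_sl2 X"
  shows "2 \<le> tr2 X"
proof (cases X)
  case (Mat2 a b c d)
  with assms have nonneg: "0 \<le> a" "0 \<le> d" "0 \<le> b * c" and det: "a * d = 1 + b * c"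
    by (auto simp: nonneg_sl2_def)
  have "1 \<le> a * d"
    using det nonneg by simp
  then have "4 \<le> (a - d)\<^sup>2 + 4 * (a * d)"
    using zero_le_power2[of "a - d"] by linarith
  also have "\<dots> = (a + d)\<^sup>2"
    by algebra
  finally have "2\<^sup>2 \<le> (a + d)\<^sup>2"
    by simp
  then have "2 \<le> a + d"
    by (rule power2_le_imp_le) (use nonneg in simp)
  with Mat2 show ?thesis by simp
qed

lemma tr2_mult_adj2_nonpos:
  fixes a b :: "int mat2"
  assumes a: "nonneg_sl2 a" and b: "nonneg_sl2 b"
    and "tr2 a < tr2 b" and "tr2 (a * b) = tr2 (b * b)"
  shows "tr2 (a * adj2 b) \<le> 0"
proof -
  have "tr2 (b * b) = tr2 b * tr2 b - 2"
    using b by (simp add: nonneg_sl2_def sl2_square)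
  with assms have "tr2 (a * adj2 b) = 2 - tr2 b * (tr2 b - tr2 a)"
    by (simp add: tr2_mult_adj2 algebra_simps)
  moreover have "tr2 b * 1 \<le> tr2 b * (tr2 b - tr2 a)"
    using tr2_ge_2[OF b] \<open>tr2 a < tr2 b\<close> by (intro mult_left_mono) simp_all
  ultimately show ?thesis
    using tr2_ge_2[OF b] by linarith
qed

lemma tr2_ab_aR_bbb_less:
  fixes a b W R :: "'a::linordered_idom mat2"
  assumes a: "nonneg_sl2 a" and b: "nonneg_sl2 b" and W: "nonneg_sl2 W" and R: "nonneg_sl2 R"
    and t_nonpos: "tr2 (a * adj2 b) \<le> 0"
  shows "tr2 (W * a * b * (a * R) * b * b * b) < tr2 (W * a * b * b * (a * R) * b * b)"
proof -
  define t where "t = tr2 (a * adj2 b)"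
  have swap: "a * adj2 b = smult2 t 1 - b * adj2 a"
    unfolding t_def by (rule mult_adj2_swap)
  have "W * a * b * b * (a * R) * b * b - W * a * b * (a * R) * b * b * b
      = W * a * (b * b * (a * R) * b * b - b * (a * R) * b * b * b)"
    by (simp add: mult.assoc right_diff_distrib)
  also have "\<dots> = W * a * (a * R - adj2 b * (a * R) * b)"
    using b by (simp add: nonneg_sl2_def sl2_bbXbb_minus_bXbbb)
  also have "\<dots> = W * a * (a * R) - W * (a * adj2 b) * (a * R * b)"
    by (simp add: mult.assoc right_diff_distrib)
  also have "\<dots> = W * a * a * R - smult2 t (W * a * R * b) + W * b * R * b"
    using a by (simp add: swap nonneg_sl2_def sl2_adj2_cancel mult.assoc algebra_simps)
  finally have "tr2 (W * a * b * b * (a * R) * b * b) - tr2 (W * a * b * (a * R) * b * b * b)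
      = tr2 (W * a * a * R) - t * tr2 (W * a * R * b) + tr2 (W * b * R * b)"
    by (metis tr2_add tr2_diff tr2_smult2)
  moreover have "2 \<le> tr2 (W * a * a * R)"
    by (intro tr2_ge_2 nonneg_sl2_mult W a R)
  moreover have "t * tr2 (W * a * R * b) \<le> 0"
    using W a b R t_nonpos
    by (simp add: t_def nonneg_sl2_def nonneg2_mult tr2_nonneg mult_nonpos_nonneg)
  moreover have "0 \<le> tr2 (W * b * R * b)"
    using W b R by (simp add: nonneg_sl2_def nonneg2_mult tr2_nonneg)
  ultimately show ?thesis
    by linarith
qed

lemma tr2_abbb_P_ab_less:
  fixes a b W P :: "'a::linordered_idom mat2"
  assumes a: "nonneg_sl2 a" and b: "nonneg_sl2 b" and W: "nonneg_sl2 W" and P: "nonneg_sl2 P"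
    and conj: "nonneg2 (adj2 a * W * a)" and t_nonpos: "tr2 (a * adj2 b) \<le> 0"
  shows "tr2 (W * a * b * b * b * P * a * b) < tr2 (W * a * b * b * P * a * b * b)"
proof -
  define t where "t = tr2 (a * adj2 b)"
  have swap: "a * adj2 b = smult2 t 1 - b * adj2 a"
    unfolding t_def by (rule mult_adj2_swap)
  have "W * a * b * b * P * a * b * b - W * a * b * b * b * P * a * b
      = W * a * (b * b * (P * a) * b * b - b * b * b * (P * a) * b)"
    by (simp add: mult.assoc right_diff_distrib)
  also have "\<dots> = W * a * (P * a - b * (P * a) * adj2 b)"
    using b by (simp add: nonneg_sl2_def sl2_bbXbb_minus_bbbXb)
  also have "\<dots> = W * a * P * a - W * a * b * P * (a * adj2 b)"
    by (simp add: mult.assoc right_diff_distrib)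
  also have "\<dots> = W * a * P * a - smult2 t (W * a * b * P) + W * a * b * P * b * adj2 a"
    by (simp add: swap mult.assoc algebra_simps)
  finally have "tr2 (W * a * b * b * P * a * b * b) - tr2 (W * a * b * b * b * P * a * b)
      = tr2 (W * a * P * a) - t * tr2 (W * a * b * P) + tr2 (W * a * b * P * b * adj2 a)"
    by (metis tr2_add tr2_diff tr2_smult2)
  moreover have "2 \<le> tr2 (W * a * P * a)"
    by (intro tr2_ge_2 nonneg_sl2_mult W a P)
  moreover have "t * tr2 (W * a * b * P) \<le> 0"
    using W a b P t_nonpos
    by (simp add: t_def nonneg_sl2_def nonneg2_mult tr2_nonneg mult_nonpos_nonneg)
  moreover have "0 \<le> tr2 (W * a * b * P * b * adj2 a)"
  proof -
    have "tr2 (W * a * b * P * b * adj2 a) = tr2 (adj2 a * W * a * (b * P * b))"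
      using tr2_mult_commute[of "W * a * b * P * b" "adj2 a"] by (simp add: mult.assoc)
    also have "0 \<le> \<dots>"
      using conj b P by (simp add: nonneg_sl2_def nonneg2_mult tr2_nonneg)
    finally show ?thesis .
  qed
  ultimately show ?thesis
    by linarith
qed

definition mat2_of :: "'a::comm_ring_1^2^2 \<Rightarrow> 'a mat2" where
  "mat2_of X = Mat2 (X $ 1 $ 1) (X $ 1 $ 2) (X $ 2 $ 1) (X $ 2 $ 2)"

lemma mat2_of_mult: "mat2_of (X ** Y) = mat2_of X * mat2_of Y"
  by (simp add: mat2_of_def matrix_matrix_mult_def sum_2)

lemma mat2_of_mat_1: "mat2_of (mat 1) = 1"
  by (simp add: mat2_of_def mat_def one_mat2_def)

lemma trace_eq_tr2: "trace X = tr2 (mat2_of X)"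
  by (simp add: mat2_of_def trace_def sum_2)

lemma nonneg_sl2_mat2_of: "SL2_nonneg X \<Longrightarrow> nonneg_sl2 (mat2_of X)"
  by (simp add: SL2_nonneg_def mat2_of_def nonneg_sl2_def det_2)

definition eval_word :: "'m::monoid_mult \<Rightarrow> 'm \<Rightarrow> letter list \<Rightarrow> 'm" where
  "eval_word a b w = prod_list (map (case_letter a b) w)"

lemma eval_word_simps [simp]:
  "eval_word a b [] = 1"
  "eval_word a b (La # w) = a * eval_word a b w"
  "eval_word a b (Lb # w) = b * eval_word a b w"
  by (simp_all add: eval_word_def)

lemma eval_word_append: "eval_word a b (u @ v) = eval_word a b u * eval_word a b v"
  by (simp add: eval_word_def)

lemma eval_word_concat_replicate:
  "eval_word a b (concat (replicate n u)) = eval_word a b u ^ n"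
  by (induction n) (simp_all add: eval_word_append)

lemma nonneg_sl2_eval_word:
  "nonneg_sl2 a \<Longrightarrow> nonneg_sl2 b \<Longrightarrow> nonneg_sl2 (eval_word a b w)"
proof (induction w)
  case (Cons l w)
  then show ?case by (cases l) (simp_all add: nonneg_sl2_mult)
qed (simp add: nonneg_sl2_one)

lemma trw_eq_tr2_eval_word: "trw A B w = tr2 (eval_word (mat2_of A) (mat2_of B) w)"
proof -
  have "mat2_of (phi A B w) = eval_word (mat2_of A) (mat2_of B) w"
    by (induction w) (auto simp: phi_def mat2_of_mat_1 mat2_of_mult split: letter.split)
  then show ?thesis
    by (simp add: trw_def trace_eq_tr2)
qed

lemma nonneg2_conj_eval_word:
  assumes a: "nonneg_sl2 a" and b: "nonneg_sl2 b" and w: "w = [] \<or> hd w = La"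
  shows "nonneg2 (adj2 a * eval_word a b w * a)"
proof (cases w)
  case Nil
  with a show ?thesis
    by (simp add: nonneg_sl2_def sl2_adj2 nonneg2_one)
next
  case (Cons l v)
  with w have "adj2 a * eval_word a b w * a = eval_word a b v * a"
    using a by (simp add: nonneg_sl2_def sl2_adj2_cancel mult.assoc)
  with a b show ?thesis
    by (simp add: nonneg_sl2_def nonneg2_mult nonneg_sl2_eval_word[OF a b, unfolded nonneg_sl2_def])
qed

theorem lemma6p1:
  fixes A B :: "int^2^2" and w :: "letter list" and s :: nat
  assumes "SL2_nonneg A" and "SL2_nonneg B"
    and "A ** B \<noteq> B ** A"
    and "well_oriented A B"
    and "trace A < trace B"
    and "trace (A ** B) = trace (B ** B)"
  shows "trw A B (w @ [La, Lb] @ concat (replicate s [La, Lb, Lb]) @ [La, Lb, Lb, Lb])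
           < trw A B (w @ [La, Lb, Lb] @ concat (replicate s [La, Lb, Lb]) @ [La, Lb, Lb])
         \<and> ((w = [] \<or> hd w = La) \<longrightarrow>
           trw A B (w @ [La, Lb, Lb, Lb] @ concat (replicate s [La, Lb, Lb]) @ [La, Lb])
           < trw A B (w @ [La, Lb, Lb] @ concat (replicate s [La, Lb, Lb]) @ [La, Lb, Lb]))"
proof -
  define a b where "a = mat2_of A" and "b = mat2_of B"
  define W P R where "W = eval_word a b w" and "P = (a * b * b) ^ s" and "R = (b * b * a) ^ s"
  have a: "nonneg_sl2 a" and b: "nonneg_sl2 b"
    using assms(1,2) by (simp_all add: a_def b_def nonneg_sl2_mat2_of)
  have W: "nonneg_sl2 W" and P: "nonneg_sl2 P" and R: "nonneg_sl2 R"
    using a b by (simp_all add: W_def P_def R_def nonneg_sl2_eval_word nonneg_sl2_power nonneg_sl2_mult)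
  have t: "tr2 (a * adj2 b) \<le> 0"
    using tr2_mult_adj2_nonpos[OF a b] assms(5,6) by (simp add: a_def b_def trace_eq_tr2 mat2_of_mult)
  have trw: "trw A B (w @ u @ concat (replicate s [La, Lb, Lb]) @ v)
      = tr2 (W * eval_word a b u * P * eval_word a b v)" for u v
    by (simp add: trw_eq_tr2_eval_word eval_word_append eval_word_concat_replicate
        a_def b_def W_def P_def mult.assoc)
  have P_a: "P * (a * Z) = a * (R * Z)" for Z
    using power_mult_rotate[of a "b * b" s] by (simp add: P_def R_def flip: mult.assoc)
  show ?thesis
    unfolding trw
    using tr2_ab_aR_bbb_less[OF a b W R t] tr2_abbb_P_ab_less[OF a b W P _ t]
      nonneg2_conj_eval_word[OF a b, of w, folded W_def]
    by (simp add: mult.assoc P_a)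
qed

end
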